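(* For every $n\ge 1$, every orientation $\overrightarrow{K_{1,n}}$ of the star $K_{1,n}$ is $\{0,1\}$-antimagic.
   Context: An oriented graph $\overrightarrow{G}$ is a directed graph obtained from a simple undirected graph by giving each edge one direction. For vertices $u,v$, $d(u,v)$ is the length of a shortest directed path from $u$ to $v$ ($d(u,u)=0$, and $d(u,v)=\infty$ if there is no such path). Let $\partial=\max\{d(u,v)<\infty : u,v\in V(\overrightarrow{G})\}$. A distance set is a nonempty $D\subseteq\{0,1,\dots,\partial\}$. The $D$-neighborhood of $u$ is $N_D(u)=\{v : d(u,v)\in D\}$. For a bijection $f:V(\overrightarrow{G})\to\{1,\dots,|V(\overrightarrow{G})|\}$, the $D$-weight of $u$ is $\omega_D(u)=\sum_{v\in N_D(u)} f(v)$. $\overrightarrow{G}$ is $D$-antimagic if $D\subseteq\{0,\dots,\partial\}$ and there is such a bijection $f$ with all $D$-weights pairwise distinct. *)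

theory Defs
  imports Main "HOL-Library.Extended_Nat"
begin

inductive walk :: "('a \<times> 'a) set \<Rightarrow> 'a \<Rightarrow> 'a \<Rightarrow> nat \<Rightarrow> bool" for A where
  walk_nil: "walk A u u 0"
| walk_step: "(u, w) \<in> A \<Longrightarrow> walk A w v k \<Longrightarrow> walk A u v (Suc k)"

definition ddist :: "('a \<times> 'a) set \<Rightarrow> 'a \<Rightarrow> 'a \<Rightarrow> enat" where
  "ddist A u v = (if \<exists>k. walk A u v k then enat (LEAST k. walk A u v k) else \<infinity>)"

definition finite_diam :: "'a set \<Rightarrow> ('a \<times> 'a) set \<Rightarrow> nat" where
  "finite_diam V A = Max {k. \<exists>u\<in>V. \<exists>v\<in>V. ddist A u v = enat k}"

definition oriented_graph :: "'a set \<Rightarrow> ('a \<times> 'a) set \<Rightarrow> bool" where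
  "oriented_graph V A \<longleftrightarrow> finite V \<and> A \<subseteq> V \<times> V \<and>
     (\<forall>u. (u, u) \<notin> A) \<and> (\<forall>u v. (u, v) \<in> A \<longrightarrow> (v, u) \<notin> A)"

definition D_nbhd :: "('a \<times> 'a) set \<Rightarrow> 'a set \<Rightarrow> nat set \<Rightarrow> 'a \<Rightarrow> 'a set" where
  "D_nbhd A V D u = {v \<in> V. \<exists>k\<in>D. ddist A u v = enat k}"

definition D_weight :: "('a \<times> 'a) set \<Rightarrow> 'a set \<Rightarrow> nat set \<Rightarrow> ('a \<Rightarrow> nat) \<Rightarrow> 'a \<Rightarrow> nat" where
  "D_weight A V D f u = (\<Sum>v\<in>D_nbhd A V D u. f v)"

definition D_antimagic :: "'a set \<Rightarrow> ('a \<times> 'a) set \<Rightarrow> nat set \<Rightarrow> bool" where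
  "D_antimagic V A D \<longleftrightarrow> D \<noteq> {} \<and> D \<subseteq> {0..finite_diam V A} \<and>
     (\<exists>f. bij_betw f V {1..card V} \<and> inj_on (D_weight A V D f) V)"

definition star_orientation :: "'a set \<Rightarrow> ('a \<times> 'a) set \<Rightarrow> 'a \<Rightarrow> nat \<Rightarrow> bool" where
  "star_orientation V A c n \<longleftrightarrow> finite V \<and> c \<in> V \<and> card V = n + 1 \<and>
     A \<subseteq> ({c} \<times> (V - {c})) \<union> ((V - {c}) \<times> {c}) \<and>
     (\<forall>l\<in>V - {c}. ((c, l) \<in> A \<longleftrightarrow> (l, c) \<notin> A))"

end

theory Submission
  imports Defs
begin

text \<open>The \<open>{0, 1}\<close>-weight of a vertex is its own label plus the labels of its
  out-neighbours. Give the centre the label \<open>n + 1\<close>, the leaves with an arc into the centre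
  the labels \<open>1, \<dots>, i\<close> and the leaves with an arc from the centre the labels
  \<open>i + 1, \<dots>, n\<close>. Then the latter leaves have weight at most \<open>n\<close>, the former have distinct
  weights in \<open>n + 2, \<dots>, n + 1 + i\<close>, and the centre has weight \<open>n + 1\<close> plus the labels of the
  out-leaves, which is \<open>n + 1\<close> if there are none and exceeds \<open>n + 1 + i\<close> otherwise.\<close>

lemma walk_0_iff: "walk A u v 0 \<longleftrightarrow> u = v"
  by (auto elim: walk.cases intro: walk.intros)

lemma walk_Suc_0_iff: "walk A u v (Suc 0) \<longleftrightarrow> (u, v) \<in> A"
  by (auto elim!: walk.cases intro: walk.intros)

lemma ddist_eq_enat_iff:
  "ddist A u v = enat k \<longleftrightarrow> walk A u v k \<and> (\<forall>j<k. \<not> walk A u v j)"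
proof
  assume "ddist A u v = enat k"
  then have walks: "\<exists>k. walk A u v k" and least: "(LEAST k. walk A u v k) = k"
    by (auto simp: ddist_def split: if_splits)
  show "walk A u v k \<and> (\<forall>j<k. \<not> walk A u v j)"
    using LeastI_ex[OF walks] not_less_Least[of _ "walk A u v"] least by auto
next
  assume "walk A u v k \<and> (\<forall>j<k. \<not> walk A u v j)"
  then show "ddist A u v = enat k"
    unfolding ddist_def by (auto intro!: Least_equality simp: not_less[symmetric])
qed

lemma ddist_eq_0_iff: "ddist A u v = enat 0 \<longleftrightarrow> u = v"
  by (simp add: ddist_eq_enat_iff walk_0_iff)

lemma ddist_eq_1_iff: "ddist A u v = enat 1 \<longleftrightarrow> (u, v) \<in> A \<and> u \<noteq> v"
  by (auto simp: ddist_eq_enat_iff walk_0_iff walk_Suc_0_iff less_Suc_eq)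

lemma D_nbhd_0_1:
  assumes "A \<subseteq> V \<times> V" and "u \<in> V"
  shows "D_nbhd A V {0, 1} u = insert u (A `` {u})"
proof -
  have "(\<exists>k\<in>{0, 1}. ddist A u v = enat k) \<longleftrightarrow> u = v \<or> (u, v) \<in> A" for v
    using ddist_eq_0_iff[of A u v] ddist_eq_1_iff[of A u v] by blast
  then show ?thesis
    using assms unfolding D_nbhd_def by (auto simp del: insert_iff)
qed

lemma D_weight_0_1:
  assumes "oriented_graph V A" and "u \<in> V"
  shows "D_weight A V {0, 1} f u = f u + sum f (A `` {u})"
proof -
  have "finite (A `` {u})" and "u \<notin> A `` {u}" and "A \<subseteq> V \<times> V"
    using assms(1) finite_subset[of "A `` {u}" V] by (auto simp: oriented_graph_def)
  then show ?thesis
    unfolding D_weight_def D_nbhd_0_1[OF \<open>A \<subseteq> V \<times> V\<close> assms(2)] by simp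
qed

lemma finite_diam_ge:
  assumes "oriented_graph V A" and "u \<in> V" and "v \<in> V" and "ddist A u v = enat k"
  shows "k \<le> finite_diam V A"
proof -
  have "{k. \<exists>u\<in>V. \<exists>v\<in>V. ddist A u v = enat k} \<subseteq> (\<lambda>(u, v). the_enat (ddist A u v)) ` (V \<times> V)"
    by force
  moreover have "finite V"
    using assms(1) by (simp add: oriented_graph_def)
  ultimately have "finite {k. \<exists>u\<in>V. \<exists>v\<in>V. ddist A u v = enat k}"
    by (meson finite_SigmaI finite_imageI finite_subset)
  then show ?thesis
    unfolding finite_diam_def using assms(2-4) by (intro Max_ge) auto
qed

lemma bij_betw_append_intervals:
  fixes s t :: nat
  assumes "bij_betw g S {1..s}" and "bij_betw h T {1..t}" and "S \<inter> T = {}"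
  shows "bij_betw (\<lambda>x. if x \<in> S then g x else s + h x) (S \<union> T) {1..s + t}"
proof -
  let ?f = "\<lambda>x. if x \<in> S then g x else s + h x"
  have "bij_betw ?f S {1..s}"
    using assms(1) by (rule bij_betw_cong[THEN iffD1, rotated]) simp
  moreover have "bij_betw ((+) s) {1..t} {s + 1..s + t}"
    using image_add_atLeastAtMost[of s 1 t] by (simp add: ac_simps)
  then have "bij_betw (\<lambda>x. s + h x) T {s + 1..s + t}"
    using bij_betw_trans[OF assms(2)] unfolding comp_def by blast
  then have "bij_betw ?f T {s + 1..s + t}"
    by (rule bij_betw_cong[THEN iffD1, rotated]) (use assms(3) in auto)
  ultimately have "bij_betw ?f (S \<union> T) ({1..s} \<union> {s + 1..s + t})"
    by (rule bij_betw_combine) auto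
  moreover have "{1..s} \<union> {s + 1..s + t} = {1..s + t}"
    by auto
  ultimately show ?thesis
    by simp
qed

lemma star_orientation_oriented_graph:
  "star_orientation V A c n \<Longrightarrow> oriented_graph V A"
  by (auto simp: star_orientation_def oriented_graph_def)

lemma star_orientation_leaves:
  assumes "star_orientation V A c n"
  shows "A `` {c} \<union> A\<inverse> `` {c} = V - {c}" and "A `` {c} \<inter> A\<inverse> `` {c} = {}"
  using assms by (auto simp: star_orientation_def)

lemma star_orientation_Image_leaf:
  assumes "star_orientation V A c n"
  shows "l \<in> A\<inverse> `` {c} \<Longrightarrow> A `` {l} = {c}" and "l \<in> A `` {c} \<Longrightarrow> A `` {l} = {}"
  using assms by (auto simp: star_orientation_def)

lemma star_orientation_ex_labelling:
  assumes "star_orientation V A c n"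
  obtains f where "bij_betw f V {1..n + 1}" and "f c = n + 1"
    and "\<forall>x\<in>A\<inverse> `` {c}. \<forall>y\<in>A `` {c}. f x < f y"
proof -
  let ?In = "A\<inverse> `` {c}" and ?Out = "A `` {c}"
  have "finite V" and "c \<in> V" and "card V = n + 1"
    using assms by (auto simp: star_orientation_def)
  then have "finite ?In" and "finite ?Out"
    using star_orientation_leaves(1)[OF assms] by (auto intro: finite_subset)
  then have "card ?In + card ?Out = n"
    using star_orientation_leaves[OF assms] card_Un_disjoint[of ?Out ?In] \<open>card V = n + 1\<close>
      \<open>finite V\<close> \<open>c \<in> V\<close>
    by simp
  obtain gI gO where gI: "bij_betw gI ?In {1..card ?In}" and gO: "bij_betw gO ?Out {1..card ?Out}"
    using finite_same_card_bij[OF \<open>finite ?In\<close>] finite_same_card_bij[OF \<open>finite ?Out\<close>]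
    by (metis card_atLeastAtMost diff_Suc_1 finite_atLeastAtMost)
  let ?g = "\<lambda>x. if x \<in> ?In then gI x else card ?In + gO x"
  have "bij_betw ?g (V - {c}) {1..n}"
    using bij_betw_append_intervals[OF gI gO] star_orientation_leaves[OF assms]
    by (simp add: Un_commute Int_commute \<open>card ?In + card ?Out = n\<close>)
  moreover have "bij_betw (\<lambda>_. 1) {c} {1..1::nat}"
    by (simp add: bij_betw_def)
  ultimately have "bij_betw (\<lambda>x. if x \<in> V - {c} then ?g x else n + 1) V {1..n + 1}"
    using bij_betw_append_intervals[of ?g "V - {c}" n "\<lambda>_. 1" "{c}" 1] \<open>c \<in> V\<close>
    by (simp add: insert_absorb)
  moreover have "?g x < ?g y" if "x \<in> ?In" and "y \<in> ?Out" for x y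
  proof -
    have "gI x \<le> card ?In" and "1 \<le> gO y"
      using that gI gO by (auto simp: bij_betw_def)
    moreover have "y \<notin> ?In"
      using that star_orientation_leaves(2)[OF assms] by blast
    ultimately show ?thesis
      using that by simp
  qed
  moreover have "?In \<subseteq> V - {c}" and "?Out \<subseteq> V - {c}"
    using star_orientation_leaves(1)[OF assms] by auto
  ultimately show thesis
    by (intro that[of "\<lambda>x. if x \<in> V - {c} then ?g x else n + 1"]) (auto simp del: Diff_iff)
qed

lemma star_orientation_inj_on_D_weight:
  assumes star: "star_orientation V A c n"
    and f: "bij_betw f V {1..n + 1}" and f_c: "f c = n + 1"
    and in_below_out: "\<forall>x\<in>A\<inverse> `` {c}. \<forall>y\<in>A `` {c}. f x < f y"
  shows "inj_on (D_weight A V {0, 1} f) V"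
proof -
  \<comment> \<open>Kept opaque: the simplifier would turn \<open>{0, 1}\<close> into \<open>{0, Suc 0}\<close> and no
    longer match the weight equations below.\<close>
  define W where "W = D_weight A V {0, 1} f"
  let ?In = "A\<inverse> `` {c}" and ?Out = "A `` {c}"
  have graph: "oriented_graph V A"
    using star by (rule star_orientation_oriented_graph)
  have "finite V" and "c \<in> V"
    using star by (auto simp: star_orientation_def)
  have V: "V = insert c (?Out \<union> ?In)" and leaves_V: "?Out \<union> ?In \<subseteq> V"
    using star_orientation_leaves(1)[OF star] \<open>c \<in> V\<close> by auto
  have "inj_on f V"
    using f by (rule bij_betw_imp_inj_on)
  have f_range: "f x \<in> {1..n + 1}" if "x \<in> V" for x
    using f that by (rule bij_betw_apply)
  have W_c: "W c = n + 1 + sum f ?Out"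
    unfolding W_def using D_weight_0_1[OF graph \<open>c \<in> V\<close>] f_c by simp
  have W_In: "W x = f x + (n + 1)" if "x \<in> ?In" for x
    unfolding W_def using D_weight_0_1[OF graph, of x] star_orientation_Image_leaf(1)[OF star that]
      that leaves_V f_c
    by auto
  have W_Out: "W y = f y" if "y \<in> ?Out" for y
    unfolding W_def using D_weight_0_1[OF graph, of y] star_orientation_Image_leaf(2)[OF star that]
      that leaves_V
    by auto
  have f_Out: "f y \<le> n" if "y \<in> ?Out" for y
  proof -
    have "y \<in> V" and "y \<noteq> c"
      using that star_orientation_leaves(1)[OF star] by auto
    then have "f y \<noteq> f c"
      using inj_onD[OF \<open>inj_on f V\<close>] \<open>c \<in> V\<close> by metis
    with f_range[OF \<open>y \<in> V\<close>] show ?thesis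
      using f_c by auto
  qed
  have "inj_on f ?Out" and "inj_on (\<lambda>x. f x + (n + 1)) ?In"
    using inj_on_subset[OF \<open>inj_on f V\<close>] leaves_V by (auto simp: inj_on_def)
  have "inj_on W ?Out"
    using \<open>inj_on f ?Out\<close> by (rule inj_on_cong[THEN iffD2, rotated]) (rule W_Out)
  moreover have "inj_on W ?In"
    using \<open>inj_on (\<lambda>x. f x + (n + 1)) ?In\<close> by (rule inj_on_cong[THEN iffD2, rotated]) (rule W_In)
  moreover have "W ` ?Out \<inter> W ` ?In = {}"
    using f_Out by (force simp: W_Out W_In)
  moreover have "sum f ?Out \<noteq> f x" if "x \<in> ?In" for x
  proof (cases "?Out = {}")
    case True
    have "f x \<ge> 1"
      using f_range that leaves_V by auto
    then show ?thesis
      using True by simp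
  next
    case False
    then obtain y where "y \<in> ?Out"
      by blast
    have "finite ?Out"
      using leaves_V \<open>finite V\<close> by (auto intro: finite_subset)
    with \<open>y \<in> ?Out\<close> have "f y \<le> sum f ?Out"
      by (intro member_le_sum) simp_all
    moreover have "f x < f y"
      using in_below_out that \<open>y \<in> ?Out\<close> by blast
    ultimately show ?thesis
      by simp
  qed
  then have "W c \<notin> W ` (?Out \<union> ?In)"
    using f_Out by (force simp: W_c W_Out W_In)
  ultimately show ?thesis
    unfolding W_def[symmetric] by (subst V) (auto simp: inj_on_Un)
qed

lemma star_orientation_finite_diam_ge_1:
  assumes "n \<ge> 1" and star: "star_orientation V A c n"
  shows "1 \<le> finite_diam V A"
proof -
  have "card (V - {c}) = n"
    using star by (simp add: star_orientation_def)
  then obtain l where "l \<in> V - {c}"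
    using \<open>n \<ge> 1\<close> by (metis all_not_in_conv card.empty not_one_le_zero)
  then have "(c, l) \<in> A \<or> (l, c) \<in> A"
    using star by (auto simp: star_orientation_def)
  then obtain u v where "(u, v) \<in> A" and "u \<noteq> v"
    using \<open>l \<in> V - {c}\<close> by blast
  then have "ddist A u v = enat 1"
    by (rule ddist_eq_1_iff[THEN iffD2, OF conjI])
  moreover have "oriented_graph V A"
    using star by (rule star_orientation_oriented_graph)
  ultimately show ?thesis
    using \<open>(u, v) \<in> A\<close> by (intro finite_diam_ge[of V A u v]) (auto simp: oriented_graph_def)
qed

theorem mainTheorem2:
  fixes V :: "'a set" and A :: "('a \<times> 'a) set" and c :: 'a and n :: nat
  assumes "n \<ge> 1" and "star_orientation V A c n"
  shows "D_antimagic V A {0, 1}"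
proof -
  obtain f where f: "bij_betw f V {1..n + 1}" and "f c = n + 1"
    and "\<forall>x\<in>A\<inverse> `` {c}. \<forall>y\<in>A `` {c}. f x < f y"
    using star_orientation_ex_labelling[OF assms(2)] .
  then have "inj_on (D_weight A V {0, 1} f) V"
    using star_orientation_inj_on_D_weight[OF assms(2)] by blast
  moreover have "card V = n + 1"
    using assms(2) by (simp add: star_orientation_def)
  moreover have "{0, 1} \<subseteq> {0..finite_diam V A}"
    using star_orientation_finite_diam_ge_1[OF assms] by auto
  ultimately show ?thesis
    unfolding D_antimagic_def using f by auto
qed

end
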